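(* Let $\tilde R<0$ and suppose the intervention set $\mathcal I$ of $\mathcal G$ is partial. Then every optimal policy $\tilde\pi^*$ of the absorbing MDP $\tilde{\mathcal M}$ (i.e. $\tilde V^{\tilde\pi^*}(d_0)=\sup_\pi\tilde V^\pi(d_0)$) satisfies $P_{\mathcal G}(\tilde\pi^* )=0$.
   Context: $\mathcal M=(\mathcal S,\mathcal A,P,r,\gamma)$ is a discounted MDP with discrete state and action spaces, reward $r(s,a)\in[0,1]$, discount $\gamma\in[0,1)$, initial distribution $d_0$. $\mathcal S$ contains two distinguished states $s_\triangleright,s_\circ$ forming $\mathcal S_{\mathrm{unsafe}}$; $\mathcal S_{\mathrm{safe}}=\mathcal S\setminus\mathcal S_{\mathrm{unsafe}}$; from $s_\triangleright$ every action leads to $s_\circ$, $s_\circ$ is absorbing, and $r=0$ on $\mathcal S_{\mathrm{unsafe}}$. Policies are stationary. Intervention rule: $\mathcal G=(\bar Q,\mu,\eta)$ with backup policy $\mu$, $\eta\in[0,1]$, $\bar Q:\mathcal S_{\mathrm{safe}}\times\mathcal A\to[0,1]$; intervention set $\mathcal I=\{(s,a)\in\mathcal S_{\mathrm{safe}}\times\mathcal A:\bar Q(s,a)-\mathbb E_{a'\sim\mu(\cdot|s)}\bar Q(s,a')>\eta\}$. A set $\mathcal X\subseteq\mathcal S_{\mathrm{safe}}\times\mathcal A$ is partial if for every $(s,a)\in\mathcal X$ there is $a'$ with $(s,a')\notin\mathcal X$. Absorbing MDP: $\tilde{\mathcal M}=(\mathcal S\cup\{s_\dagger\},\mathcal A,\tilde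 P,\tilde r,\gamma)$: $\tilde r(s,a)=\tilde R$ if $(s,a)\in\mathcal I$, $\tilde r(s_\dagger,a)=0$, $\tilde r=r$ otherwise; $\tilde P(\cdot|s,a)$ is the point mass at $s_\dagger$ if $(s,a)\in\mathcal I$ or $s=s_\dagger$, and $P(\cdot|s,a)$ otherwise; $\tilde V^\pi(d_0)$ is the value of $\pi$ in $\tilde{\mathcal M}$ from $d_0$. $P_{\mathcal G}(\pi)=(1-\gamma)\sum_{h\ge0}\gamma^h\Pr(\exists t\le h:(s_t,a_t)\in\mathcal I)$, for trajectories of $\pi$ in $\mathcal M$ from $s_0\sim d_0$. *)

theory Defs
  imports "HOL-Probability.Probability"
begin

primrec state_dist :: "'s pmf \<Rightarrow> ('s \<Rightarrow> 'a \<Rightarrow> 's pmf) \<Rightarrow> ('s \<Rightarrow> 'a pmf) \<Rightarrow> nat \<Rightarrow> 's pmf" where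
  "state_dist d0 P pol 0 = d0"
| "state_dist d0 P pol (Suc t) =
     bind_pmf (state_dist d0 P pol t) (\<lambda>s. bind_pmf (pol s) (\<lambda>a. P s a))"

definition sa_dist :: "'s pmf \<Rightarrow> ('s \<Rightarrow> 'a \<Rightarrow> 's pmf) \<Rightarrow> ('s \<Rightarrow> 'a pmf) \<Rightarrow> nat \<Rightarrow> ('s \<times> 'a) pmf" where
  "sa_dist d0 P pol t = bind_pmf (state_dist d0 P pol t) (\<lambda>s. map_pmf (\<lambda>a. (s, a)) (pol s))"

definition mdp_value :: "real \<Rightarrow> ('s \<Rightarrow> 'a \<Rightarrow> real) \<Rightarrow> 's pmf \<Rightarrow> ('s \<Rightarrow> 'a \<Rightarrow> 's pmf) \<Rightarrow> ('s \<Rightarrow> 'a pmf) \<Rightarrow> real" where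
  "mdp_value \<gamma> r d0 P pol =
     (\<Sum>t. \<gamma> ^ t * measure_pmf.expectation (sa_dist d0 P pol t) (\<lambda>(s, a). r s a))"

primrec traj :: "'s pmf \<Rightarrow> ('s \<Rightarrow> 'a \<Rightarrow> 's pmf) \<Rightarrow> ('s \<Rightarrow> 'a pmf) \<Rightarrow> nat \<Rightarrow> ('s \<times> 'a) list pmf" where
  "traj d0 P pol 0 = bind_pmf d0 (\<lambda>s. map_pmf (\<lambda>a. [(s, a)]) (pol s))"
| "traj d0 P pol (Suc h) =
     bind_pmf (traj d0 P pol h) (\<lambda>xs. bind_pmf (P (fst (last xs)) (snd (last xs)))
        (\<lambda>s'. map_pmf (\<lambda>a'. xs @ [(s', a')]) (pol s')))"

definition interv_set :: "'s set \<Rightarrow> ('s \<Rightarrow> 'a \<Rightarrow> real) \<Rightarrow> ('s \<Rightarrow> 'a pmf) \<Rightarrow> real \<Rightarrow> ('s \<times> 'a) set" where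
  "interv_set S_safe Qbar mu \<eta> =
     {(s, a). s \<in> S_safe \<and> Qbar s a - measure_pmf.expectation (mu s) (Qbar s) > \<eta>}"

definition partial_set :: "('s \<times> 'a) set \<Rightarrow> bool" where
  "partial_set X \<longleftrightarrow> (\<forall>(s, a) \<in> X. \<exists>a'. (s, a') \<notin> X)"

definition interv_prob :: "real \<Rightarrow> ('s \<times> 'a) set \<Rightarrow> 's pmf \<Rightarrow> ('s \<Rightarrow> 'a \<Rightarrow> 's pmf) \<Rightarrow> ('s \<Rightarrow> 'a pmf) \<Rightarrow> real" where
  "interv_prob \<gamma> I d0 P pol =
     (1 - \<gamma>) * (\<Sum>h. \<gamma> ^ h * measure_pmf.prob (traj d0 P pol h) {xs. \<exists>p \<in> set xs. p \<in> I})"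

text \<open>Absorbing MDP: state space 's option, with None playing the role of s_dagger.\<close>
fun abs_P :: "('s \<Rightarrow> 'a \<Rightarrow> 's pmf) \<Rightarrow> ('s \<times> 'a) set \<Rightarrow> 's option \<Rightarrow> 'a \<Rightarrow> 's option pmf" where
  "abs_P P I None a = return_pmf None"
| "abs_P P I (Some s) a = (if (s, a) \<in> I then return_pmf None else map_pmf Some (P s a))"

fun abs_r :: "('s \<Rightarrow> 'a \<Rightarrow> real) \<Rightarrow> ('s \<times> 'a) set \<Rightarrow> real \<Rightarrow> 's option \<Rightarrow> 'a \<Rightarrow> real" where
  "abs_r r I R None a = 0"
| "abs_r r I R (Some s) a = (if (s, a) \<in> I then R else r s a)"

end

theory Submission
  imports Defs
begin

text \<open>Condition a policy of the absorbing MDP, in every state, on the actions that do not trigger an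
  intervention (there are such actions because the intervention set is partial). Conditioning only
  raises the probabilities of these actions, so the modified policy never intervenes and reaches
  every genuine state with at least the original probability; it collects at least the same
  ordinary rewards while it avoids the negative reward R. Optimality therefore forces the original
  policy to intervene with probability zero at every time step of positive discount weight, and on
  intervention-free prefixes the absorbing MDP and the original MDP generate the same
  trajectories.\<close>

definition avoiding_policy :: "('s \<times> 'a) set \<Rightarrow> ('s option \<Rightarrow> 'a pmf) \<Rightarrow> 's option \<Rightarrow> 'a pmf" where
  "avoiding_policy I pol x = (case x of
      None \<Rightarrow> pol None
    | Some s \<Rightarrow>
        if set_pmf (pol (Some s)) \<inter> {a. (s, a) \<notin> I} \<noteq> {}
        then cond_pmf (pol (Some s)) {a. (s, a) \<notin> I}
        else return_pmf (SOME a. (s, a) \<notin> I))"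

lemma set_pmf_avoiding_policy:
  assumes "\<exists>a. (s, a) \<notin> I" "a \<in> set_pmf (avoiding_policy I pol (Some s))"
  shows "(s, a) \<notin> I"
  using assms someI_ex[OF assms(1)]
  by (auto simp: avoiding_policy_def set_cond_pmf split: if_splits)

lemma nn_integral_avoiding_policy_ge:
  fixes f :: "'a \<Rightarrow> ennreal" and pol :: "'s option \<Rightarrow> 'a pmf"
  assumes f_I: "\<And>a. (s, a) \<in> I \<Longrightarrow> f a = 0"
  shows "(\<integral>\<^sup>+a. f a \<partial>pol (Some s)) \<le> (\<integral>\<^sup>+a. f a \<partial>avoiding_policy I pol (Some s))"
proof (cases "set_pmf (pol (Some s)) \<inter> {a. (s, a) \<notin> I} \<noteq> {}")
  case True
  let ?p = "pol (Some s)" and ?A = "{a. (s, a) \<notin> I}"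
  have "0 < measure_pmf.prob ?p ?A"
    using True by (auto intro: measure_pmf_posI)
  then have pmf_le: "pmf ?p a \<le> pmf (cond_pmf ?p ?A) a" if "a \<in> ?A" for a
    using that True by (simp add: pmf_cond le_divide_eq mult_left_le)
  show ?thesis
    unfolding nn_integral_measure_pmf avoiding_policy_def option.case if_P[OF True]
    by (intro nn_integral_mono) (metis f_I pmf_le mem_Collect_eq mult_right_mono mult_zero_right
        ennreal_leI order_refl zero_le)
next
  case False
  then have "(\<integral>\<^sup>+a. f a \<partial>pol (Some s)) = 0"
    using f_I by (subst nn_integral_0_iff_AE) (auto simp: AE_measure_pmf_iff)
  then show ?thesis by simp
qed

lemma nn_integral_option_pmf_mono:
  fixes g g' :: "'s option \<Rightarrow> ennreal"
  assumes "\<And>s. pmf M (Some s) \<le> pmf M' (Some s)" "g None = 0" "\<And>s. g (Some s) \<le> g' (Some s)"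
  shows "(\<integral>\<^sup>+x. g x \<partial>M) \<le> (\<integral>\<^sup>+x. g' x \<partial>M')"
  unfolding nn_integral_measure_pmf
proof (rule nn_integral_mono)
  fix x
  show "ennreal (pmf M x) * g x \<le> ennreal (pmf M' x) * g' x"
    using assms by (cases x) (auto intro!: mult_mono)
qed

lemma nn_integral_avoiding_policy_mono:
  fixes g :: "'s option \<Rightarrow> 'a \<Rightarrow> ennreal" and pol :: "'s option \<Rightarrow> 'a pmf"
  assumes "\<And>s. pmf M (Some s) \<le> pmf M' (Some s)"
    and "\<And>a. g None a = 0" and "\<And>s a. (s, a) \<in> I \<Longrightarrow> g (Some s) a = 0"
  shows "(\<integral>\<^sup>+x. \<integral>\<^sup>+a. g x a \<partial>pol x \<partial>M) \<le> (\<integral>\<^sup>+x. \<integral>\<^sup>+a. g x a \<partial>avoiding_policy I pol x \<partial>M')"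
  using assms by (intro nn_integral_option_pmf_mono nn_integral_avoiding_policy_ge) auto

lemma ennreal_pmf_state_dist_Suc:
  "ennreal (pmf (state_dist D Q pol (Suc t)) y)
     = (\<integral>\<^sup>+x. \<integral>\<^sup>+a. ennreal (pmf (Q x a) y) \<partial>pol x \<partial>state_dist D Q pol t)"
  by (simp add: ennreal_pmf_bind)

lemma ennreal_expectation_sa_dist:
  fixes f :: "'s \<Rightarrow> 'a \<Rightarrow> real"
  assumes "\<And>x a. 0 \<le> f x a" "\<And>x a. f x a \<le> B"
  shows "ennreal (measure_pmf.expectation (sa_dist D Q pol t) (\<lambda>(x, a). f x a))
     = (\<integral>\<^sup>+x. \<integral>\<^sup>+a. ennreal (f x a) \<partial>pol x \<partial>state_dist D Q pol t)"
proof -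
  have "integrable (sa_dist D Q pol t) (\<lambda>(x, a). f x a)"
    using assms by (intro measure_pmf.integrable_const_bound[where B = B]) (auto split: prod.split)
  then show ?thesis
    using assms by (subst nn_integral_eq_integral[symmetric]) (auto simp: sa_dist_def split: prod.split)
qed

lemma state_dist_avoiding_policy_ge:
  fixes pol :: "'s option \<Rightarrow> 'a pmf"
  assumes "\<And>s. \<exists>a. (s, a) \<notin> I"
  shows "pmf (state_dist D (abs_P P I) pol t) (Some s)
     \<le> pmf (state_dist D (abs_P P I) (avoiding_policy I pol) t) (Some s)"
proof (induction t arbitrary: s)
  case (Suc t)
  have "ennreal (pmf (state_dist D (abs_P P I) pol (Suc t)) (Some s))
     \<le> ennreal (pmf (state_dist D (abs_P P I) (avoiding_policy I pol) (Suc t)) (Some s))"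
    unfolding ennreal_pmf_state_dist_Suc
    by (rule nn_integral_avoiding_policy_mono[OF Suc.IH]) (auto simp: pmf_map_inj')
  then show ?case by simp
qed simp

lemma expectation_abs_r_avoiding_policy_ge:
  fixes pol :: "'s option \<Rightarrow> 'a pmf"
  assumes "\<And>s. \<exists>a. (s, a) \<notin> I" and "\<And>s a. 0 \<le> r s a" "\<And>s a. r s a \<le> 1"
  shows "measure_pmf.expectation (sa_dist D (abs_P P I) pol t) (\<lambda>(x, a). abs_r r I 0 x a)
     \<le> measure_pmf.expectation (sa_dist D (abs_P P I) (avoiding_policy I pol) t) (\<lambda>(x, a). abs_r r I 0 x a)"
proof -
  have bounds: "0 \<le> abs_r r I 0 x a" "abs_r r I 0 x a \<le> 1" for x a
    using assms(2,3) by (cases x; simp)+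
  have "ennreal (measure_pmf.expectation (sa_dist D (abs_P P I) pol t) (\<lambda>(x, a). abs_r r I 0 x a))
     \<le> ennreal (measure_pmf.expectation (sa_dist D (abs_P P I) (avoiding_policy I pol) t) (\<lambda>(x, a). abs_r r I 0 x a))"
    unfolding ennreal_expectation_sa_dist[OF bounds]
    by (rule nn_integral_avoiding_policy_mono[OF state_dist_avoiding_policy_ge[OF assms(1)]]) auto
  moreover have "0 \<le> measure_pmf.expectation (sa_dist D (abs_P P I) (avoiding_policy I pol) t) (\<lambda>(x, a). abs_r r I 0 x a)"
    using bounds by (intro integral_nonneg_AE) (auto split: prod.split)
  ultimately show ?thesis by (simp add: ennreal_le_iff)
qed

lemma mem_apfst_Some_image:
  "(None, a) \<notin> apfst Some ` I" "(Some s, a) \<in> apfst Some ` I \<longleftrightarrow> (s, a) \<in> I"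
  by (force simp: apfst_def map_prod_def)+

lemma expectation_abs_r_decompose:
  assumes "\<And>s a. 0 \<le> r s a" "\<And>s a. r s a \<le> 1"
  shows "measure_pmf.expectation M (\<lambda>(x, a). abs_r r I R x a)
     = measure_pmf.expectation M (\<lambda>(x, a). abs_r r I 0 x a) + R * measure_pmf.prob M (apfst Some ` I)"
proof -
  have split_R: "(\<lambda>(x, a). abs_r r I R x a)
      = (\<lambda>y. (\<lambda>(x, a). abs_r r I 0 x a) y + R * indicator (apfst Some ` I) y)"
  proof
    fix y :: "'a option \<times> 'b"
    obtain x a where y: "y = (x, a)" by fastforce
    show "(\<lambda>(x, a). abs_r r I R x a) y = (\<lambda>(x, a). abs_r r I 0 x a) y + R * indicator (apfst Some ` I) y"
      by (cases x) (auto simp: y indicator_def mem_apfst_Some_image)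
  qed
  have "\<bar>abs_r r I 0 x a\<bar> \<le> 1" for x a
    using assms by (cases x) auto
  then have "integrable M (\<lambda>(x, a). abs_r r I 0 x a)"
    by (intro measure_pmf.integrable_const_bound[where B = 1]) (auto split: prod.split)
  moreover have "integrable M (\<lambda>y. R * indicator (apfst Some ` I) y)"
    by (intro measure_pmf.integrable_const_bound[where B = "\<bar>R\<bar>"]) (auto simp: indicator_def)
  ultimately show ?thesis
    unfolding split_R by simp
qed

lemma summable_discounted_expectation:
  fixes f :: "'b \<Rightarrow> real"
  assumes "\<And>y. \<bar>f y\<bar> \<le> B" "0 \<le> \<gamma>" "\<gamma> < 1"
  shows "summable (\<lambda>t. \<gamma> ^ t * measure_pmf.expectation (M t) f)"
proof (rule summable_comparison_test')
  show "summable (\<lambda>t. B * \<gamma> ^ t)"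
    using assms(2,3) by (intro summable_mult summable_geometric) auto
  fix t
  have "integrable (M t) f"
    using assms(1) by (intro measure_pmf.integrable_const_bound[where B = B]) auto
  then have "measure_pmf.expectation (M t) (\<lambda>y. \<bar>f y\<bar>) \<le> B"
    using assms(1) by (intro measure_pmf.integral_le_const integrable_abs) auto
  then have "\<bar>measure_pmf.expectation (M t) f\<bar> \<le> B"
    using integral_abs_bound order_trans by blast
  then show "norm (\<gamma> ^ t * measure_pmf.expectation (M t) f) \<le> B * \<gamma> ^ t"
    using assms(2) by (simp add: abs_mult mult.commute[of B] mult_left_mono)
qed

lemma summable_gap_eq_0:
  fixes a b c :: "nat \<Rightarrow> real"
  assumes "summable a" "summable b" "\<And>t. a t + c t \<le> b t" "\<And>t. 0 \<le> c t" "suminf b \<le> suminf a"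
  shows "c t = 0"
proof -
  have nonneg: "0 \<le> b t - a t" for t
    using assms(3,4)[of t] by linarith
  have "suminf (\<lambda>t. b t - a t) = suminf b - suminf a"
    using suminf_diff[OF assms(2,1)] by simp
  then have "suminf (\<lambda>t. b t - a t) = 0"
    using assms(5) suminf_nonneg[OF summable_diff[OF assms(2,1)] nonneg] by linarith
  then have "b t - a t = 0"
    using suminf_eq_zero_iff[OF summable_diff[OF assms(2,1)] nonneg] by blast
  then show ?thesis
    using assms(3,4)[of t] by linarith
qed

lemma mem_set_pmf_sa_dist:
  "(x, a) \<in> set_pmf (sa_dist D Q pol t) \<longleftrightarrow> x \<in> set_pmf (state_dist D Q pol t) \<and> a \<in> set_pmf (pol x)"
  unfolding sa_dist_def by auto

lemma traj_ne_Nil: "xs \<in> set_pmf (traj d0 P pol h) \<Longrightarrow> xs \<noteq> []"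
  by (induction h arbitrary: xs) auto

text \<open>Up to the first intervention the absorbing MDP moves exactly like the original one, so its
  state-action supports track the last pair of every trajectory prefix.\<close>

lemma traj_disjoint_if_absorbing_never_intervenes:
  fixes pol :: "'s option \<Rightarrow> 'a pmf"
  assumes "\<forall>t\<le>h. set_pmf (sa_dist (map_pmf Some d0) (abs_P P I) pol t) \<inter> apfst Some ` I = {}"
    and "xs \<in> set_pmf (traj d0 P (\<lambda>s. pol (Some s)) h)"
  shows "set xs \<inter> I = {} \<and> apfst Some (last xs) \<in> set_pmf (sa_dist (map_pmf Some d0) (abs_P P I) pol h)"
  using assms
proof (induction h arbitrary: xs)
  case 0
  from "0.prems"(2) obtain s a where xs: "xs = [(s, a)]"
    and "s \<in> set_pmf d0" and "a \<in> set_pmf (pol (Some s))"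
    by auto
  then have sa: "(Some s, a) \<in> set_pmf (sa_dist (map_pmf Some d0) (abs_P P I) pol 0)"
    by (simp add: mem_set_pmf_sa_dist)
  moreover have "set_pmf (sa_dist (map_pmf Some d0) (abs_P P I) pol 0) \<inter> apfst Some ` I = {}"
    using "0.prems"(1) by blast
  ultimately have "(s, a) \<notin> I"
    using mem_apfst_Some_image(2)[of s a I] by blast
  then show ?case
    using sa by (simp add: xs)
next
  case (Suc h)
  from Suc.prems(2) obtain ys s a where ys: "ys \<in> set_pmf (traj d0 P (\<lambda>s. pol (Some s)) h)"
    and s: "s \<in> set_pmf (P (fst (last ys)) (snd (last ys)))" and a: "a \<in> set_pmf (pol (Some s))"
    and xs: "xs = ys @ [(s, a)]"
    by auto
  obtain s0 a0 where last_ys: "last ys = (s0, a0)"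
    by fastforce
  have "\<forall>t\<le>h. set_pmf (sa_dist (map_pmf Some d0) (abs_P P I) pol t) \<inter> apfst Some ` I = {}"
    using Suc.prems(1) by simp
  from Suc.IH[OF this ys] have ys_disj: "set ys \<inter> I = {}"
    and "(Some s0, a0) \<in> set_pmf (sa_dist (map_pmf Some d0) (abs_P P I) pol h)"
    using last_ys by auto
  then have s0: "Some s0 \<in> set_pmf (state_dist (map_pmf Some d0) (abs_P P I) pol h)"
    and a0: "a0 \<in> set_pmf (pol (Some s0))"
    by (simp_all add: mem_set_pmf_sa_dist)
  have "(s0, a0) \<notin> I"
    using ys_disj last_in_set[OF traj_ne_Nil[OF ys]] last_ys by auto
  then have "Some s \<in> set_pmf (abs_P P I (Some s0) a0)"
    using s last_ys by simp
  then have "Some s \<in> set_pmf (state_dist (map_pmf Some d0) (abs_P P I) pol (Suc h))"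
    using s0 a0 by (simp del: abs_P.simps) blast
  then have sa: "(Some s, a) \<in> set_pmf (sa_dist (map_pmf Some d0) (abs_P P I) pol (Suc h))"
    using a by (simp add: mem_set_pmf_sa_dist)
  moreover have "set_pmf (sa_dist (map_pmf Some d0) (abs_P P I) pol (Suc h)) \<inter> apfst Some ` I = {}"
    using Suc.prems(1) by blast
  ultimately have "(s, a) \<notin> I"
    using mem_apfst_Some_image(2)[of s a I] by blast
  then show ?case
    using ys_disj sa by (simp add: xs)
qed

lemma interv_prob_eq_0_if_absorbing_never_intervenes:
  fixes pol :: "'s option \<Rightarrow> 'a pmf"
  assumes "\<And>t. \<gamma> ^ t \<noteq> 0 \<Longrightarrow>
    set_pmf (sa_dist (map_pmf Some d0) (abs_P P I) pol t) \<inter> apfst Some ` I = {}"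
  shows "interv_prob \<gamma> I d0 P (\<lambda>s. pol (Some s)) = 0"
proof -
  have discounted_traj_0:
    "\<gamma> ^ h * measure_pmf.prob (traj d0 P (\<lambda>s. pol (Some s)) h) {xs. \<exists>p \<in> set xs. p \<in> I} = 0" for h
  proof (cases "\<gamma> ^ h = 0")
    case False
    then have "\<forall>t\<le>h. set_pmf (sa_dist (map_pmf Some d0) (abs_P P I) pol t) \<inter> apfst Some ` I = {}"
      using assms by (auto simp: power_eq_0_iff)
    then have "set xs \<inter> I = {}" if "xs \<in> set_pmf (traj d0 P (\<lambda>s. pol (Some s)) h)" for xs
      using traj_disjoint_if_absorbing_never_intervenes that by blast
    then have "set_pmf (traj d0 P (\<lambda>s. pol (Some s)) h) \<inter> {xs. \<exists>p \<in> set xs. p \<in> I} = {}"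
      by blast
    then show ?thesis
      by (simp add: measure_pmf_zero_iff)
  qed simp
  show ?thesis
    unfolding interv_prob_def discounted_traj_0 by simp
qed

lemma absorbing_never_intervenes_if_avoiding_policy_not_better:
  fixes P :: "'s \<Rightarrow> 'a \<Rightarrow> 's pmf" and pol :: "'s option \<Rightarrow> 'a pmf"
  assumes r: "\<And>s a. 0 \<le> r s a" "\<And>s a. r s a \<le> 1" and \<gamma>: "0 \<le> \<gamma>" "\<gamma> < 1" and R: "R < 0"
    and avoidable: "\<And>s. \<exists>a. (s, a) \<notin> I"
    and not_better: "mdp_value \<gamma> (abs_r r I R) (map_pmf Some d0) (abs_P P I) (avoiding_policy I pol)
      \<le> mdp_value \<gamma> (abs_r r I R) (map_pmf Some d0) (abs_P P I) pol"
    and "\<gamma> ^ t \<noteq> 0"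
  shows "set_pmf (sa_dist (map_pmf Some d0) (abs_P P I) pol t) \<inter> apfst Some ` I = {}"
proof -
  let ?D = "map_pmf Some d0" and ?Q = "abs_P P I" and ?pol' = "avoiding_policy I pol"
  define reward where "reward pl t =
    measure_pmf.expectation (sa_dist ?D ?Q pl t) (\<lambda>(x, a). abs_r r I R x a)" for pl t
  define interv where "interv pl t = measure_pmf.prob (sa_dist ?D ?Q pl t) (apfst Some ` I)" for pl t
  have "interv ?pol' t = 0" for t
    unfolding interv_def measure_pmf_zero_iff
    using set_pmf_avoiding_policy[OF avoidable] by (auto simp: mem_set_pmf_sa_dist)
  then have gain: "reward pol t + (- R) * interv pol t \<le> reward ?pol' t" for t
    unfolding reward_def expectation_abs_r_decompose[OF r, where R = R]
    using expectation_abs_r_avoiding_policy_ge[OF avoidable r] by (simp add: interv_def)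
  have "\<bar>abs_r r I R x a\<bar> \<le> 1 - R" for x a
  proof (cases x)
    case (Some s)
    then show ?thesis
      using r[of s a] R by auto
  qed (use R in simp)
  then have summable: "summable (\<lambda>t. \<gamma> ^ t * reward pl t)" for pl
    unfolding reward_def using \<gamma> by (intro summable_discounted_expectation) (auto split: prod.split)
  have discounted_gain: "\<gamma> ^ t * reward pol t + \<gamma> ^ t * ((- R) * interv pol t) \<le> \<gamma> ^ t * reward ?pol' t" for t
    using mult_left_mono[OF gain[of t], of "\<gamma> ^ t"] \<gamma> by (simp add: right_diff_distrib)
  have gain_nonneg: "0 \<le> \<gamma> ^ t * ((- R) * interv pol t)" for t
    unfolding interv_def using \<gamma> R by (intro mult_nonneg_nonneg) auto
  have sums_le: "(\<Sum>t. \<gamma> ^ t * reward ?pol' t) \<le> (\<Sum>t. \<gamma> ^ t * reward pol t)"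
    using not_better by (simp add: mdp_value_def reward_def)
  have "\<gamma> ^ t * ((- R) * interv pol t) = 0"
    by (rule summable_gap_eq_0[OF summable summable discounted_gain gain_nonneg sums_le])
  then have "interv pol t = 0"
    using \<open>\<gamma> ^ t \<noteq> 0\<close> R by (simp del: power_eq_0_iff)
  then show ?thesis
    by (simp add: interv_def measure_pmf_zero_iff)
qed

theorem mainTheorem9:
  fixes P :: "'s \<Rightarrow> 'a \<Rightarrow> 's pmf" and r :: "'s \<Rightarrow> 'a \<Rightarrow> real"
    and \<gamma> :: real and d0 :: "'s pmf"
    and s_tri s_circ :: 's
    and Qbar :: "'s \<Rightarrow> 'a \<Rightarrow> real" and mu :: "'s \<Rightarrow> 'a pmf" and \<eta> :: real
    and R :: real and pol_opt :: "'s option \<Rightarrow> 'a pmf"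
  assumes r_range: "\<forall>s a. 0 \<le> r s a \<and> r s a \<le> 1"
    and gamma: "0 \<le> \<gamma>" "\<gamma> < 1"
    and distinct_unsafe: "s_tri \<noteq> s_circ"
    and P_tri: "\<forall>a. P s_tri a = return_pmf s_circ"
    and P_circ: "\<forall>a. P s_circ a = return_pmf s_circ"
    and r_unsafe: "\<forall>a. r s_tri a = 0 \<and> r s_circ a = 0"
    and eta: "0 \<le> \<eta>" "\<eta> \<le> 1"
    and Qbar_range: "\<forall>s \<in> UNIV - {s_tri, s_circ}. \<forall>a. 0 \<le> Qbar s a \<and> Qbar s a \<le> 1"
    and R_neg: "R < 0"
    and partial: "partial_set (interv_set (UNIV - {s_tri, s_circ}) Qbar mu \<eta>)"
    and optimal: "\<forall>pol :: 's option \<Rightarrow> 'a pmf.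
        mdp_value \<gamma> (abs_r r (interv_set (UNIV - {s_tri, s_circ}) Qbar mu \<eta>) R) (map_pmf Some d0)
          (abs_P P (interv_set (UNIV - {s_tri, s_circ}) Qbar mu \<eta>)) pol
        \<le> mdp_value \<gamma> (abs_r r (interv_set (UNIV - {s_tri, s_circ}) Qbar mu \<eta>) R) (map_pmf Some d0)
          (abs_P P (interv_set (UNIV - {s_tri, s_circ}) Qbar mu \<eta>)) pol_opt"
  shows "interv_prob \<gamma> (interv_set (UNIV - {s_tri, s_circ}) Qbar mu \<eta>) d0 P (\<lambda>s. pol_opt (Some s)) = 0"
proof (rule interv_prob_eq_0_if_absorbing_never_intervenes)
  let ?I = "interv_set (UNIV - {s_tri, s_circ}) Qbar mu \<eta>"
  have avoidable: "\<exists>a. (s, a) \<notin> ?I" for s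
    using partial unfolding partial_set_def by (cases "(s, undefined) \<in> ?I") blast+
  show "set_pmf (sa_dist (map_pmf Some d0) (abs_P P ?I) pol_opt t) \<inter> apfst Some ` ?I = {}"
    if "\<gamma> ^ t \<noteq> 0" for t
    by (rule absorbing_never_intervenes_if_avoiding_policy_not_better[where r = r,
          OF _ _ gamma R_neg avoidable _ that]) (use r_range optimal in auto)
qed

end
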